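(* Consider the relaxed problem with action set $\{a^*,\hat a\}$, and let $(v_n)$ be a uniformly bounded sequence of contracts, each of the form $v_n(z)=\phi_n(L_n(\hat a))$ for a weakly increasing $\phi_n:\mathbb{R}\to u([\underline w,\infty))$, satisfying $\int\phi_n(L_n(\hat a))\,d\mu^n_{a^*}-c(a^* )\ge\int\phi_n(L_n(\hat a))\,d\mu^n_{\hat a}-c(\hat a)$ for all $n$. Then $\mathrm{Var}_{a^*}[\phi_n(L_n(\hat a))]\ge\exp[-I_{a^*,\hat a}(\hat L_{\hat a}(\hat a))n+o(n)]$, i.e. $\liminf_n\frac1n\log\mathrm{Var}_{a^*}[\phi_n(L_n(\hat a))]\ge-I_{a^*,\hat a}(\hat L_{\hat a}(\hat a))$.
   Context: Finite action set $A$, $a^*\in A$, cost $c:A\to\mathbb{R}$, and $\hat a\in A$ with $c(\hat a)<c(a^* )$. A measurable space $Z$ with $\sigma$-finite measure $\nu$; for each $n$ and $a\in A$, a probability measure $\mu^n_a$ on $Z$ with density $g^n_a$ w.r.t. $\nu$; $\mathbb{P}_a$, $\mathrm{Var}_a$ denote probability and variance under $\mu^n_a$. For $a'\neq a^*$, $L_n(a')=\frac1n\log\frac{g^n_{a^*}(z)}{g^n_{a'}(z)}$, well-defined $\mu^n_a$-a.s. for all $a\in A$. For each $a\in A$, $a'\neq a^*$, $I_{a,a'}:\mathbb{R}\to[0,\infty]$ satisfies, for all measurable $B\subseteq\mathbb{R}$, $-\inf_{\mathrm{int}B}I_{a,a'}\le\liminf_n\frac1n\log\mathbb{P}_a[L_n(a')\in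 B]\le\limsup_n\frac1n\log\mathbb{P}_a[L_n(a')\in B]\le-\inf_{\mathrm{cl}B}I_{a,a'}$. Each $I_{a,a'}$ has a unique minimizer $\hat L_a(a')$, with $\hat L_a(a')\neq\hat L_{\tilde a}(a')$ for $a\neq\tilde a$, and compact level sets; $I_{a^*,a'}$ is continuous at $\hat L_{a'}(a')$ and $\hat L_{a^*}(a')$. $u:[\underline w,\infty)\to\mathbb{R}$ is the agent's (strictly increasing) utility. *)

theory Defs
  imports "HOL-Probability.Probability"
begin

definition mu :: "'z measure \<Rightarrow> (nat \<Rightarrow> 'a \<Rightarrow> 'z \<Rightarrow> real) \<Rightarrow> nat \<Rightarrow> 'a \<Rightarrow> 'z measure" where
  "mu \<nu> g n a = density \<nu> (\<lambda>z. ennreal (g n a z))"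

definition LLR :: "(nat \<Rightarrow> 'a \<Rightarrow> 'z \<Rightarrow> real) \<Rightarrow> 'a \<Rightarrow> nat \<Rightarrow> 'a \<Rightarrow> 'z \<Rightarrow> real" where
  "LLR g astar n a' z = ln (g n astar z / g n a' z) / real n"

definition elog :: "real \<Rightarrow> ereal" where
  "elog p = (if p = 0 then - \<infinity> else ereal (ln p))"

definition var :: "'z measure \<Rightarrow> ('z \<Rightarrow> real) \<Rightarrow> real" where
  "var M X = (\<integral>z. (X z - (\<integral>y. X y \<partial>M))\<^sup>2 \<partial>M)"

end

theory Submission
  imports Defs
begin

(* Write l = Lhat ahat ahat and Y_n = phi_n (L_n ahat). Under ahat the statistic L_n concentrates
   at l: this is the LDP upper bound together with the unique zero of the good rate function.
   The incentive constraint gives E_astar Y_n - E_ahat Y_n >= D = c astar - c ahat > 0, so under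
   ahat the deviation |Y_n - E_astar Y_n| has mass at least D/2 on S = {|L_n - l| < d}. On S the
   likelihood ratio g_astar / g_ahat lies between e^(n(l-d)) and e^(n(l+d)); this transfers the
   mass to E_astar [|Y_n - E_astar Y_n| 1_S] >= (D/2) e^(n(l-d)) and bounds P_astar(S) by
   e^(n(l+d)), so Cauchy-Schwarz yields Var_astar Y_n >= (D^2/4) e^(n(l-3d)). Finally
   -I_{astar,ahat}(l) <= l, by the LDP lower bound and P_astar(L_n < r) <= e^(nr).
   Monotonicity of phi_n is used only for measurability. *)

lemma elog_div_le:
  assumes "0 \<le> p" "p \<le> exp (real n * x)" "0 < n"
  shows "elog p / ereal (real n) \<le> ereal x"
proof (cases "p = 0")
  case False
  then have "ln p \<le> ln (exp (real n * x))"
    using assms by (subst ln_le_cancel_iff) auto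
  then show ?thesis
    using False assms(3) by (simp add: elog_def divide_le_eq mult.commute)
qed (use assms in \<open>simp add: elog_def\<close>)

lemma elog_div_ge:
  assumes "0 < c" "c * exp (real n * x) \<le> p" "0 < n"
  shows "ereal (ln c / real n + x) \<le> elog p / ereal (real n)"
proof -
  have pos: "0 < c * exp (real n * x)"
    using assms(1) by simp
  then have "ln (c * exp (real n * x)) \<le> ln p"
    using assms(2) by (subst ln_le_cancel_iff) auto
  then have "(ln c + real n * x) / real n \<le> ln p / real n"
    using assms(1,3) by (intro divide_right_mono) (simp_all add: ln_mult)
  then have "ln c / real n + x \<le> ln p / real n"
    using assms(3) by (simp add: add_divide_distrib)
  then show ?thesis
    using pos assms(2,3) by (simp add: elog_def)
qed

lemma liminf_elog_div_ge:
  assumes "0 < c" "eventually (\<lambda>n. c * exp (real n * x) \<le> p n) sequentially"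
  shows "ereal x \<le> liminf (\<lambda>n. elog (p n) / ereal (real n))"
proof -
  have "(\<lambda>n. ln c / real n + x) \<longlonglongrightarrow> 0 + x"
    by (intro tendsto_add lim_const_over_n tendsto_const)
  then have "(\<lambda>n. ereal (ln c / real n + x)) \<longlonglongrightarrow> ereal x"
    by (intro tendsto_ereal) simp
  then have "ereal x = liminf (\<lambda>n. ereal (ln c / real n + x))"
    by (rule lim_imp_Liminf[symmetric, OF trivial_limit_sequentially])
  also have "\<dots> \<le> liminf (\<lambda>n. elog (p n) / ereal (real n))"
  proof (intro Liminf_mono)
    show "eventually (\<lambda>n. ereal (ln c / real n + x) \<le> elog (p n) / ereal (real n)) sequentially"
      using assms(2) eventually_gt_at_top[of 0] by eventually_elim (rule elog_div_ge[OF assms(1)])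
  qed
  finally show ?thesis .
qed

lemma tendsto_zero_if_limsup_elog_div_neg:
  assumes "\<And>n. 0 \<le> p n" "limsup (\<lambda>n. elog (p n) / ereal (real n)) < 0"
  shows "p \<longlonglongrightarrow> 0"
proof -
  obtain r where r: "limsup (\<lambda>n. elog (p n) / ereal (real n)) < ereal r" "r < 0"
    using ereal_dense2[OF assms(2)] by (auto simp: zero_ereal_def)
  then have ev: "eventually (\<lambda>n. elog (p n) / ereal (real n) < ereal r) sequentially"
    by (simp add: Limsup_lessD)
  have "eventually (\<lambda>n. norm (p n) \<le> exp r ^ n) sequentially"
    using ev eventually_gt_at_top[of 0]
  proof eventually_elim
    case (elim n)
    show ?case
    proof (cases "p n = 0")
      case False
      then have "ln (p n) < real n * r"
        using elim by (simp add: elog_def divide_less_eq mult.commute)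
      then have "exp (ln (p n)) < exp (real n * r)"
        by simp
      then show ?thesis
        using False assms(1)[of n] by (simp add: exp_of_nat_mult)
    qed simp
  qed
  moreover have "(\<lambda>n. exp r ^ n) \<longlonglongrightarrow> 0"
    using r(2) by (intro LIMSEQ_power_zero) simp
  ultimately show ?thesis
    by (rule Lim_null_comparison)
qed

lemma rate_function_pos_on_closed:
  fixes I :: "'a::t2_space \<Rightarrow> ereal"
  assumes level_sets: "\<And>\<alpha>. compact {x. I x \<le> ereal \<alpha>}"
    and strict_min: "\<And>x. x \<noteq> l \<Longrightarrow> I l < I x" and "0 \<le> I l"
    and "closed F" "l \<notin> F"
  shows "\<exists>e>0. \<forall>x\<in>F. ereal e \<le> I x"
proof (rule ccontr)
  assume "\<not> ?thesis"
  then have small: "\<exists>x\<in>F. I x < ereal e" if "0 < e" for e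
    using that by (meson not_le)
  have "(F \<inter> {x. I x \<le> ereal 1}) \<inter> (\<Inter>e\<in>{0<..}. {x. I x \<le> ereal e}) \<noteq> {}"
  proof (rule compact_imp_fip_image)
    show "compact (F \<inter> {x. I x \<le> ereal 1})"
      using \<open>closed F\<close> level_sets by (rule closed_Int_compact)
    show "closed {x. I x \<le> ereal e}" for e
      using level_sets by (rule compact_imp_closed)
  next
    fix E :: "real set"
    assume "finite E" "E \<subseteq> {0<..}"
    then have "0 < Min (insert 1 E)"
      by (subst Min_gr_iff) auto
    then obtain x where "x \<in> F" and x_small: "I x < ereal (Min (insert 1 E))"
      using small by blast
    have "I x \<le> ereal e" if "e \<in> insert 1 E" for e
    proof -
      have "ereal (Min (insert 1 E)) \<le> ereal e"
        using \<open>finite E\<close> that by simp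
      then show ?thesis
        using x_small by (meson less_imp_le order_trans)
    qed
    then have "x \<in> (F \<inter> {x. I x \<le> ereal 1}) \<inter> (\<Inter>e\<in>E. {x. I x \<le> ereal e})"
      using \<open>x \<in> F\<close> by blast
    then show "(F \<inter> {x. I x \<le> ereal 1}) \<inter> (\<Inter>e\<in>E. {x. I x \<le> ereal e}) \<noteq> {}"
      by blast
  qed
  then obtain x where x: "x \<in> (F \<inter> {x. I x \<le> ereal 1}) \<inter> (\<Inter>e\<in>{0<..}. {x. I x \<le> ereal e})"
    by (meson equals0I)
  then have "x \<in> F" and x_le: "\<And>e. 0 < e \<Longrightarrow> I x \<le> ereal e"
    by auto
  have "I x \<le> 0"
  proof (rule ereal_le_epsilon2)
    show "I x \<le> 0 + ereal e" if "0 < e" for e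
      using x_le[OF that] by simp
  qed
  moreover have "I l < I x"
    using \<open>x \<in> F\<close> \<open>l \<notin> F\<close> by (intro strict_min) auto
  ultimately show False
    using \<open>0 \<le> I l\<close> by simp
qed

lemma (in finite_measure) integrable_bounded_real:
  fixes f :: "'a \<Rightarrow> real"
  assumes "f \<in> borel_measurable M" "\<And>z. z \<in> space M \<Longrightarrow> \<bar>f z\<bar> \<le> B"
  shows "integrable M f"
  using assms by (intro integrable_const_bound[where B = B] AE_I2) auto

lemma integral_density_le_scaled:
  fixes f1 f2 h :: "'z \<Rightarrow> real"
  assumes [measurable]: "f1 \<in> borel_measurable M" "f2 \<in> borel_measurable M" "h \<in> borel_measurable M"
    and nonneg: "\<And>z. z \<in> space M \<Longrightarrow> 0 \<le> f1 z" "\<And>z. z \<in> space M \<Longrightarrow> 0 \<le> f2 z"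
    and finite: "finite_measure (density M (\<lambda>z. ennreal (f1 z)))" "finite_measure (density M (\<lambda>z. ennreal (f2 z)))"
    and bounded: "\<And>z. z \<in> space M \<Longrightarrow> \<bar>h z\<bar> \<le> B"
    and le: "AE z in M. f1 z * h z \<le> C * (f2 z * h z)"
  shows "(\<integral>z. h z \<partial>density M (\<lambda>z. ennreal (f1 z))) \<le> C * (\<integral>z. h z \<partial>density M (\<lambda>z. ennreal (f2 z)))"
proof -
  have "integrable (density M (\<lambda>z. ennreal (f1 z))) h" "integrable (density M (\<lambda>z. ennreal (f2 z))) h"
    using bounded by (auto intro!: finite_measure.integrable_bounded_real[OF finite(1)]
        finite_measure.integrable_bounded_real[OF finite(2)])
  then have int: "integrable M (\<lambda>z. f1 z * h z)" "integrable M (\<lambda>z. f2 z * h z)"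
    using nonneg by (simp_all add: integrable_density)
  have "(\<integral>z. h z \<partial>density M (\<lambda>z. ennreal (f1 z))) = (\<integral>z. f1 z * h z \<partial>M)"
    using nonneg by (simp add: integral_density)
  also have "\<dots> \<le> (\<integral>z. C * (f2 z * h z) \<partial>M)"
    using int le by (intro integral_mono_AE) auto
  also have "\<dots> = C * (\<integral>z. h z \<partial>density M (\<lambda>z. ennreal (f2 z)))"
    using nonneg by (simp add: integral_density)
  finally show ?thesis .
qed

lemma (in finite_measure) Cauchy_Schwarz_integral_indicator:
  fixes f :: "'a \<Rightarrow> real"
  assumes [measurable]: "f \<in> borel_measurable M" "S \<in> sets M"
    and bounded: "\<And>z. z \<in> space M \<Longrightarrow> \<bar>f z\<bar> \<le> B"
  shows "(\<integral>z. \<bar>f z\<bar> * indicator S z \<partial>M)\<^sup>2 \<le> (\<integral>z. (f z)\<^sup>2 \<partial>M) * measure M S"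
proof -
  define a where "a = (\<integral>z. \<bar>f z\<bar> * indicator S z \<partial>M)"
  define V where "V = (\<integral>z. (f z)\<^sup>2 \<partial>M)"
  have int_a: "integrable M (\<lambda>z. \<bar>f z\<bar> * indicator S z)"
  proof (rule integrable_bounded_real)
    show "\<bar>\<bar>f z\<bar> * indicator S z\<bar> \<le> B" if "z \<in> space M" for z
      using bounded[OF that] by (auto simp: indicator_def)
  qed simp
  have int_V: "integrable M (\<lambda>z. (f z)\<^sup>2)"
  proof (rule integrable_bounded_real)
    show "\<bar>(f z)\<^sup>2\<bar> \<le> B\<^sup>2" if "z \<in> space M" for z
      using power_mono[OF bounded[OF that] abs_ge_zero, of 2] by simp
  qed simp
  have int_S: "integrable M (indicator S :: 'a \<Rightarrow> real)"
    by (rule integrable_bounded_real[where B = 1]) (auto simp: indicator_def)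
  have quadratic: "2 * t * a - t\<^sup>2 * measure M S \<le> V" for t
  proof -
    have "2 * t * a - t\<^sup>2 * measure M S = (\<integral>z. 2 * t * (\<bar>f z\<bar> * indicator S z) - t\<^sup>2 * indicator S z \<partial>M)"
      using int_a int_S by (simp add: a_def)
    also have "\<dots> \<le> V"
      unfolding V_def
    proof (intro integral_mono)
      fix z
      have "0 \<le> (\<bar>f z\<bar> - t)\<^sup>2"
        by simp
      also have "\<dots> = (f z)\<^sup>2 + t\<^sup>2 - 2 * t * \<bar>f z\<bar>"
        by (simp add: power2_diff mult_ac)
      finally have "2 * t * \<bar>f z\<bar> - t\<^sup>2 \<le> (f z)\<^sup>2"
        by linarith
      then show "2 * t * (\<bar>f z\<bar> * indicator S z) - t\<^sup>2 * indicator S z \<le> (f z)\<^sup>2"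
        by (simp add: indicator_def)
    qed (use int_a int_S int_V in auto)
    finally show ?thesis .
  qed
  have "0 \<le> a"
    unfolding a_def by (intro integral_nonneg_AE) auto
  show ?thesis
  proof (cases "measure M S = 0")
    case True
    have "a \<le> (\<integral>z. B * indicator S z \<partial>M)"
      unfolding a_def
    proof (rule integral_mono)
      show "\<bar>f z\<bar> * indicator S z \<le> B * indicator S z" if "z \<in> space M" for z
        using bounded[OF that] by (simp add: indicator_def)
    qed (use int_a int_S in auto)
    then have "a = 0"
      using True \<open>0 \<le> a\<close> by simp
    then show ?thesis
      using True by (simp add: a_def)
  next
    case False
    then have "0 < measure M S"
      by (simp add: zero_less_measure_iff)
    have "a\<^sup>2 / measure M S = 2 * (a / measure M S) * a - (a / measure M S)\<^sup>2 * measure M S"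
      using False by (simp add: field_simps power2_eq_square)
    also have "\<dots> \<le> V"
      by (rule quadratic)
    finally show ?thesis
      using \<open>0 < measure M S\<close> by (simp add: a_def V_def divide_le_eq)
  qed
qed

lemma (in prob_space) integral_abs_dev_indicator_ge:
  fixes Y :: "'a \<Rightarrow> real"
  assumes [measurable]: "Y \<in> borel_measurable M" "S \<in> sets M"
    and bounded: "\<And>z. z \<in> space M \<Longrightarrow> \<bar>Y z - m\<bar> \<le> C"
    and gap: "D \<le> m - expectation Y"
    and tail: "C * prob (space M - S) \<le> D / 2"
  shows "D / 2 \<le> (\<integral>z. \<bar>Y z - m\<bar> * indicator S z \<partial>M)"
proof -
  have int_dev: "integrable M (\<lambda>z. \<bar>Y z - m\<bar> * indicator S z)"
  proof (rule integrable_bounded_real)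
    show "\<bar>\<bar>Y z - m\<bar> * indicator S z\<bar> \<le> C" if "z \<in> space M" for z
      using bounded[OF that] by (auto simp: indicator_def)
  qed simp
  have int_tail: "integrable M (\<lambda>z. C * indicator (space M - S) z)"
    by (intro integrable_mult_right integrable_bounded_real[where B = 1]) (auto simp: indicator_def)
  have int_Y: "integrable M Y"
    using bounded by (intro integrable_bounded_real[where B = "C + \<bar>m\<bar>"]) force+
  have pointwise: "m - Y z \<le> \<bar>Y z - m\<bar> * indicator S z + C * indicator (space M - S) z"
    if "z \<in> space M" for z
    using bounded[OF that] that by (auto simp: indicator_def)
  have "D \<le> (\<integral>z. m - Y z \<partial>M)"
    using gap int_Y prob_space by simp
  also have "\<dots> \<le> (\<integral>z. \<bar>Y z - m\<bar> * indicator S z + C * indicator (space M - S) z \<partial>M)"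
    using int_dev int_tail int_Y pointwise by (intro integral_mono) auto
  also have "\<dots> = (\<integral>z. \<bar>Y z - m\<bar> * indicator S z \<partial>M) + C * prob (space M - S)"
    using int_dev int_tail by simp
  finally show ?thesis
    using tail by linarith
qed

lemma tendsto_measure_outside_ball_if_LDP_upper:
  fixes M :: "nat \<Rightarrow> 'z measure" and X :: "nat \<Rightarrow> 'z \<Rightarrow> real" and I :: "real \<Rightarrow> ereal"
  assumes upper: "limsup (\<lambda>n. elog (measure (M n) {z \<in> space (M n). X n z \<in> - ball l d}) / ereal (real n))
      \<le> - (INF x\<in>closure (- ball l d). I x)"
    and level_sets: "\<And>\<alpha>. compact {x. I x \<le> ereal \<alpha>}"
    and strict_min: "\<And>x. x \<noteq> l \<Longrightarrow> I l < I x" and "0 \<le> I l" and "0 < d"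
  shows "(\<lambda>n. measure (M n) {z \<in> space (M n). X n z \<in> - ball l d}) \<longlonglongrightarrow> 0"
proof (rule tendsto_zero_if_limsup_elog_div_neg)
  obtain e where "0 < e" and e_le: "\<forall>x\<in>- ball l d. ereal e \<le> I x"
    using rate_function_pos_on_closed[OF level_sets strict_min \<open>0 \<le> I l\<close>, of "- ball l d"] \<open>0 < d\<close>
    by auto
  have "closure (- ball l d) = - ball l d"
    by (intro closure_closed) auto
  then have "ereal e \<le> (INF x\<in>closure (- ball l d). I x)"
    using e_le by (simp add: le_INF_iff)
  then have "- (INF x\<in>closure (- ball l d). I x) \<le> ereal (- e)"
    by (simp add: ereal_uminus_le_reorder)
  also have "\<dots> < 0"
    using \<open>0 < e\<close> by simp
  finally show "limsup (\<lambda>n. elog (measure (M n) {z \<in> space (M n). X n z \<in> - ball l d}) / ereal (real n)) < 0"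
    using upper by (rule le_less_trans[rotated])
qed simp

lemma space_mu [simp]: "space (mu \<nu> g n a) = space \<nu>"
  and sets_mu [simp, measurable_cong]: "sets (mu \<nu> g n a) = sets \<nu>"
  by (simp_all add: mu_def)

lemma le_exp_mult_if_ln_div_less:
  fixes a b r :: real
  assumes "0 < a" "0 < b" "0 < n" "ln (a / b) / real n < r"
  shows "a \<le> exp (real n * r) * b"
proof -
  have "ln (a / b) < real n * r"
    using assms(3,4) by (simp add: divide_less_eq mult.commute)
  then have "a / b < exp (real n * r)"
    using assms(1,2) by (metis divide_pos_pos exp_less_cancel_iff exp_ln)
  then show ?thesis
    using assms(2) by (simp add: divide_less_eq less_imp_le)
qed

lemma le_exp_mult_if_ln_div_greater:
  fixes a b r :: real
  assumes "0 < a" "0 < b" "0 < n" "r < ln (a / b) / real n"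
  shows "b \<le> exp (- (real n * r)) * a"
proof -
  have "ln (b / a) / real n < - r"
    using assms by (simp add: ln_div divide_minus_left[symmetric] field_simps)
  then have "b \<le> exp (real n * - r) * a"
    by (rule le_exp_mult_if_ln_div_less[OF assms(2,1,3)])
  then show ?thesis
    by simp
qed

locale likelihood_ratio_pair =
  fixes \<nu> :: "'z measure" and g :: "nat \<Rightarrow> 'a \<Rightarrow> 'z \<Rightarrow> real" and astar ahat :: 'a
  assumes g_measurable [measurable]: "g n astar \<in> borel_measurable \<nu>" "g n ahat \<in> borel_measurable \<nu>"
    and g_nonneg: "z \<in> space \<nu> \<Longrightarrow> 0 \<le> g n astar z" "z \<in> space \<nu> \<Longrightarrow> 0 \<le> g n ahat z"
    and prob_space_astar: "prob_space (mu \<nu> g n astar)"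
    and prob_space_ahat: "prob_space (mu \<nu> g n ahat)"
    and AE_pos_astar: "AE z in mu \<nu> g n astar. 0 < g n astar z \<and> 0 < g n ahat z"
    and AE_pos_ahat: "AE z in mu \<nu> g n ahat. 0 < g n astar z \<and> 0 < g n ahat z"
begin

abbreviation llr :: "nat \<Rightarrow> 'z \<Rightarrow> real" where
  "llr n \<equiv> LLR g astar n ahat"

lemma llr_measurable [measurable]: "llr n \<in> borel_measurable \<nu>"
  unfolding LLR_def by measurable

lemma AE_pos_astar_imp_pos_ahat: "AE z in \<nu>. 0 < g n astar z \<longrightarrow> 0 < g n ahat z"
  using AE_pos_astar[of n] unfolding mu_def by (subst (asm) AE_density) (auto elim: AE_mp)

lemma AE_pos_ahat_imp_pos_astar: "AE z in \<nu>. 0 < g n ahat z \<longrightarrow> 0 < g n astar z"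
  using AE_pos_ahat[of n] unfolding mu_def by (subst (asm) AE_density) (auto elim: AE_mp)

lemma integral_mu_astar_le_if_llr_less:
  assumes [measurable]: "h \<in> borel_measurable \<nu>"
    and h_nonneg: "\<And>z. z \<in> space \<nu> \<Longrightarrow> 0 \<le> h z" and h_bounded: "\<And>z. z \<in> space \<nu> \<Longrightarrow> h z \<le> B"
    and support: "\<And>z. z \<in> space \<nu> \<Longrightarrow> h z \<noteq> 0 \<Longrightarrow> llr n z < r" and "0 < n"
  shows "(\<integral>z. h z \<partial>mu \<nu> g n astar) \<le> exp (real n * r) * (\<integral>z. h z \<partial>mu \<nu> g n ahat)"
  unfolding mu_def
proof (rule integral_density_le_scaled)
  show "AE z in \<nu>. g n astar z * h z \<le> exp (real n * r) * (g n ahat z * h z)"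
    using AE_pos_astar_imp_pos_ahat[of n] AE_space
  proof eventually_elim
    case (elim z)
    show ?case
    proof (cases "h z \<noteq> 0 \<and> 0 < g n astar z")
      case True
      then have "g n astar z \<le> exp (real n * r) * g n ahat z"
        using elim support \<open>0 < n\<close> by (intro le_exp_mult_if_ln_div_less) (auto simp: LLR_def)
      then show ?thesis
        using h_nonneg[of z] elim by (simp add: mult_right_mono mult.assoc[symmetric])
    next
      case False
      then show ?thesis
        using h_nonneg[of z] g_nonneg[of z n] elim by auto
    qed
  qed
qed (use g_nonneg prob_space_astar prob_space_ahat h_nonneg h_bounded in
      \<open>auto simp: mu_def prob_space_def\<close>)

lemma integral_mu_ahat_le_if_llr_greater:
  assumes [measurable]: "h \<in> borel_measurable \<nu>"
    and h_nonneg: "\<And>z. z \<in> space \<nu> \<Longrightarrow> 0 \<le> h z" and h_bounded: "\<And>z. z \<in> space \<nu> \<Longrightarrow> h z \<le> B"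
    and support: "\<And>z. z \<in> space \<nu> \<Longrightarrow> h z \<noteq> 0 \<Longrightarrow> r < llr n z" and "0 < n"
  shows "(\<integral>z. h z \<partial>mu \<nu> g n ahat) \<le> exp (- (real n * r)) * (\<integral>z. h z \<partial>mu \<nu> g n astar)"
  unfolding mu_def
proof (rule integral_density_le_scaled)
  show "AE z in \<nu>. g n ahat z * h z \<le> exp (- (real n * r)) * (g n astar z * h z)"
    using AE_pos_ahat_imp_pos_astar[of n] AE_space
  proof eventually_elim
    case (elim z)
    show ?case
    proof (cases "h z \<noteq> 0 \<and> 0 < g n ahat z")
      case True
      then have "g n ahat z \<le> exp (- (real n * r)) * g n astar z"
        using elim support \<open>0 < n\<close> by (intro le_exp_mult_if_ln_div_greater) (auto simp: LLR_def)
      then show ?thesis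
        using h_nonneg[of z] elim by (simp add: mult_right_mono mult.assoc[symmetric])
    next
      case False
      then show ?thesis
        using h_nonneg[of z] g_nonneg[of z n] elim by auto
    qed
  qed
qed (use g_nonneg prob_space_astar prob_space_ahat h_nonneg h_bounded in
      \<open>auto simp: mu_def prob_space_def\<close>)

lemma measure_mu_astar_llr_le:
  assumes "B \<in> sets borel" "B \<subseteq> {..<r}" "0 < n"
  shows "measure (mu \<nu> g n astar) {z \<in> space \<nu>. llr n z \<in> B} \<le> exp (real n * r)"
proof -
  let ?S = "{z \<in> space \<nu>. llr n z \<in> B}"
  have [measurable]: "?S \<in> sets \<nu>"
    using assms(1) by measurable
  have "measure (mu \<nu> g n astar) ?S = (\<integral>z. indicator ?S z \<partial>mu \<nu> g n astar)"
    by simp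
  also have "\<dots> \<le> exp (real n * r) * (\<integral>z. indicator ?S z \<partial>mu \<nu> g n ahat)"
    using assms(2,3) by (intro integral_mu_astar_le_if_llr_less[where B = 1]) (auto simp: indicator_def)
  also have "\<dots> \<le> exp (real n * r)"
    using prob_space.prob_le_1[OF prob_space_ahat] by simp
  finally show ?thesis .
qed

lemma limsup_log_measure_mu_astar_llr_le:
  assumes "B \<in> sets borel" "B \<subseteq> {..<r}"
  shows "limsup (\<lambda>n. elog (measure (mu \<nu> g n astar) {z \<in> space \<nu>. llr n z \<in> B}) / ereal (real n))
    \<le> ereal r"
proof (intro Limsup_bounded)
  show "eventually (\<lambda>n. elog (measure (mu \<nu> g n astar) {z \<in> space \<nu>. llr n z \<in> B}) / ereal (real n)
      \<le> ereal r) sequentially"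
    using eventually_gt_at_top[of 0]
  proof eventually_elim
    case (elim n)
    then show ?case
      by (intro elog_div_le measure_mu_astar_llr_le assms) simp_all
  qed
qed

lemma uminus_rate_le_if_LDP_lower:
  fixes J :: "real \<Rightarrow> ereal"
  assumes lower: "\<And>d. 0 < d \<Longrightarrow> - (INF x\<in>ball l d. J x)
      \<le> liminf (\<lambda>n. elog (measure (mu \<nu> g n astar) {z \<in> space \<nu>. llr n z \<in> ball l d}) / ereal (real n))"
  shows "- J l \<le> ereal l"
proof (rule ereal_le_epsilon2)
  fix d :: real
  assume "0 < d"
  have "(INF x\<in>ball l d. J x) \<le> J l"
    using \<open>0 < d\<close> by (intro INF_lower) simp
  then have "- J l \<le> - (INF x\<in>ball l d. J x)"
    by simp
  also have "\<dots> \<le> liminf (\<lambda>n. elog (measure (mu \<nu> g n astar) {z \<in> space \<nu>. llr n z \<in> ball l d}) / ereal (real n))"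
    using \<open>0 < d\<close> by (rule lower)
  also have "\<dots> \<le> limsup (\<lambda>n. elog (measure (mu \<nu> g n astar) {z \<in> space \<nu>. llr n z \<in> ball l d}) / ereal (real n))"
    by (rule Liminf_le_Limsup) simp
  also have "\<dots> \<le> ereal (l + d)"
    by (rule limsup_log_measure_mu_astar_llr_le) (auto simp: dist_real_def)
  finally show "- J l \<le> ereal l + ereal d"
    by simp
qed

lemma var_mu_astar_ge_exp:
  assumes [measurable]: "Y \<in> borel_measurable \<nu>"
    and Y_bounded: "\<And>z. z \<in> space \<nu> \<Longrightarrow> \<bar>Y z\<bar> \<le> K"
    and "0 \<le> D" and gap: "D \<le> (\<integral>z. Y z \<partial>mu \<nu> g n astar) - (\<integral>z. Y z \<partial>mu \<nu> g n ahat)"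
    and tail: "4 * K * measure (mu \<nu> g n ahat) {z \<in> space \<nu>. llr n z \<in> - ball l d} \<le> D"
    and "0 < n"
  shows "D\<^sup>2 / 4 * exp (real n * (l - 3 * d)) \<le> var (mu \<nu> g n astar) Y"
proof -
  define S where "S = {z \<in> space \<nu>. llr n z \<in> ball l d}"
  define m where "m = (\<integral>z. Y z \<partial>mu \<nu> g n astar)"
  define a where "a = (\<integral>z. \<bar>Y z - m\<bar> * indicator S z \<partial>mu \<nu> g n astar)"
  interpret astar: prob_space "mu \<nu> g n astar"
    by (rule prob_space_astar)
  interpret ahat: prob_space "mu \<nu> g n ahat"
    by (rule prob_space_ahat)
  have [measurable]: "S \<in> sets \<nu>"
    using borel_open[OF open_ball] unfolding S_def by measurable
  have "\<bar>m\<bar> \<le> (\<integral>z. K \<partial>mu \<nu> g n astar)"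
    unfolding m_def using Y_bounded
    by (intro integral_abs_bound[THEN order_trans] integral_mono astar.integrable_bounded_real) auto
  also have "\<dots> = K"
    using astar.prob_space by simp
  finally have dev_bounded: "\<bar>Y z - m\<bar> \<le> 2 * K" if "z \<in> space \<nu>" for z
    using Y_bounded[OF that] by simp
  have "D / 2 \<le> (\<integral>z. \<bar>Y z - m\<bar> * indicator S z \<partial>mu \<nu> g n ahat)"
  proof (rule ahat.integral_abs_dev_indicator_ge)
    have "space (mu \<nu> g n ahat) - S = {z \<in> space \<nu>. llr n z \<in> - ball l d}"
      by (auto simp: S_def)
    then show "2 * K * ahat.prob (space (mu \<nu> g n ahat) - S) \<le> D / 2"
      using tail by simp
  qed (use gap dev_bounded in \<open>simp_all add: m_def\<close>)
  also have "\<dots> \<le> exp (- (real n * (l - d))) * a"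
    unfolding a_def using dev_bounded[THEN order_trans[OF abs_ge_zero]] dev_bounded \<open>0 < n\<close>
    by (intro integral_mu_ahat_le_if_llr_greater[where B = "2 * K"])
      (auto simp: S_def indicator_def dist_real_def)
  finally have "D / 2 * exp (real n * (l - d)) \<le> exp (- (real n * (l - d))) * a * exp (real n * (l - d))"
    by (intro mult_right_mono) auto
  also have "\<dots> = a * (exp (real n * (l - d)) * exp (- (real n * (l - d))))"
    by (simp only: mult_ac)
  finally have "D / 2 * exp (real n * (l - d)) \<le> a"
    by (simp add: exp_minus_inverse)
  then have "(D / 2 * exp (real n * (l - d)))\<^sup>2 \<le> a\<^sup>2"
    using \<open>0 \<le> D\<close> by (intro power_mono) auto
  also have "\<dots> \<le> var (mu \<nu> g n astar) Y * measure (mu \<nu> g n astar) S"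
    unfolding a_def var_def m_def[symmetric] using dev_bounded
    by (intro astar.Cauchy_Schwarz_integral_indicator) auto
  also have "\<dots> \<le> var (mu \<nu> g n astar) Y * exp (real n * (l + d))"
    unfolding S_def using \<open>0 < n\<close>
    by (intro mult_left_mono measure_mu_astar_llr_le) (auto simp: var_def dist_real_def)
  also have "(D / 2 * exp (real n * (l - d)))\<^sup>2 = D\<^sup>2 / 4 * exp (real n * (l - 3 * d)) * exp (real n * (l + d))"
    by (simp add: power2_eq_square mult_exp_exp algebra_simps)
  finally show ?thesis
    by simp
qed

theorem liminf_log_var_mu_astar_ge:
  assumes [measurable]: "\<And>n. Y n \<in> borel_measurable \<nu>"
    and bounded: "\<exists>K. \<forall>n. \<forall>z\<in>space \<nu>. \<bar>Y n z\<bar> \<le> K"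
    and "0 < D" and gap: "\<And>n. D \<le> (\<integral>z. Y n z \<partial>mu \<nu> g n astar) - (\<integral>z. Y n z \<partial>mu \<nu> g n ahat)"
    and concentrated: "\<And>d. 0 < d \<Longrightarrow>
      (\<lambda>n. measure (mu \<nu> g n ahat) {z \<in> space \<nu>. llr n z \<in> - ball l d}) \<longlonglongrightarrow> 0"
  shows "ereal l \<le> liminf (\<lambda>n. elog (var (mu \<nu> g n astar) (Y n)) / ereal (real n))"
proof (rule ereal_le_epsilon2)
  obtain K0 where K0: "\<forall>n. \<forall>z\<in>space \<nu>. \<bar>Y n z\<bar> \<le> K0"
    using bounded by blast
  define K where "K = max K0 1"
  have "0 < K" and Y_bounded: "\<And>n z. z \<in> space \<nu> \<Longrightarrow> \<bar>Y n z\<bar> \<le> K"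
    using K0 by (auto simp: K_def intro: max.coboundedI1)
  fix e :: real
  assume "0 < e"
  have "eventually (\<lambda>n. measure (mu \<nu> g n ahat) {z \<in> space \<nu>. llr n z \<in> - ball l (e / 3)} < D / (4 * K))
      sequentially"
    using \<open>0 < e\<close> \<open>0 < D\<close> \<open>0 < K\<close> by (intro order_tendstoD(2)[OF concentrated]) auto
  then have "eventually (\<lambda>n. D\<^sup>2 / 4 * exp (real n * (l - e)) \<le> var (mu \<nu> g n astar) (Y n)) sequentially"
    using eventually_gt_at_top[of 0]
  proof eventually_elim
    case (elim n)
    then have "4 * K * measure (mu \<nu> g n ahat) {z \<in> space \<nu>. llr n z \<in> - ball l (e / 3)} \<le> D"
      using \<open>0 < K\<close> by (simp add: field_simps)
    then show ?case
      using var_mu_astar_ge_exp[of "Y n" K D n l "e / 3"] Y_bounded gap \<open>0 < D\<close> elim by simp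
  qed
  then have "ereal (l - e) \<le> liminf (\<lambda>n. elog (var (mu \<nu> g n astar) (Y n)) / ereal (real n))"
    using \<open>0 < D\<close> by (intro liminf_elog_div_ge[of "D\<^sup>2 / 4"]) auto
  then have "ereal (l - e) + ereal e
      \<le> liminf (\<lambda>n. elog (var (mu \<nu> g n astar) (Y n)) / ereal (real n)) + ereal e"
    by (rule add_right_mono)
  then show "ereal l \<le> liminf (\<lambda>n. elog (var (mu \<nu> g n astar) (Y n)) / ereal (real n)) + ereal e"
    by simp
qed

end

theorem lemma5:
  fixes A :: "'a set" and astar ahat :: 'a and c :: "'a \<Rightarrow> real"
    and \<nu> :: "'z measure" and g :: "nat \<Rightarrow> 'a \<Rightarrow> 'z \<Rightarrow> real"
    and I :: "'a \<Rightarrow> 'a \<Rightarrow> real \<Rightarrow> ereal" and Lhat :: "'a \<Rightarrow> 'a \<Rightarrow> real"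
    and u :: "real \<Rightarrow> real" and w :: real
    and \<phi> :: "nat \<Rightarrow> real \<Rightarrow> real"
  assumes finA: "finite A" and astar: "astar \<in> A" and ahat: "ahat \<in> A"
    and cost: "c ahat < c astar"
    and sf: "sigma_finite_measure \<nu>"
    and g_meas: "\<And>n a. a \<in> A \<Longrightarrow> g n a \<in> borel_measurable \<nu>"
    and g_nonneg: "\<And>n a z. a \<in> A \<Longrightarrow> z \<in> space \<nu> \<Longrightarrow> 0 \<le> g n a z"
    and g_prob: "\<And>n a. a \<in> A \<Longrightarrow> prob_space (mu \<nu> g n a)"
    and L_wd: "\<And>n a a'. a \<in> A \<Longrightarrow> a' \<in> A \<Longrightarrow> a' \<noteq> astar \<Longrightarrow>
        AE z in mu \<nu> g n a. 0 < g n astar z \<and> 0 < g n a' z"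
    and LDP_lower: "\<And>a a' B. a \<in> A \<Longrightarrow> a' \<in> A \<Longrightarrow> a' \<noteq> astar \<Longrightarrow> B \<in> sets borel \<Longrightarrow>
        - (INF x\<in>interior B. I a a' x) \<le>
          liminf (\<lambda>n. elog (measure (mu \<nu> g n a) {z \<in> space (mu \<nu> g n a). LLR g astar n a' z \<in> B}) / ereal (real n))"
    and LDP_upper: "\<And>a a' B. a \<in> A \<Longrightarrow> a' \<in> A \<Longrightarrow> a' \<noteq> astar \<Longrightarrow> B \<in> sets borel \<Longrightarrow>
        limsup (\<lambda>n. elog (measure (mu \<nu> g n a) {z \<in> space (mu \<nu> g n a). LLR g astar n a' z \<in> B}) / ereal (real n))
          \<le> - (INF x\<in>closure B. I a a' x)"
    and I_nonneg: "\<And>a a' x. a \<in> A \<Longrightarrow> a' \<in> A \<Longrightarrow> a' \<noteq> astar \<Longrightarrow> 0 \<le> I a a' x"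
    and Lhat_min: "\<And>a a' x. a \<in> A \<Longrightarrow> a' \<in> A \<Longrightarrow> a' \<noteq> astar \<Longrightarrow> I a a' (Lhat a a') \<le> I a a' x"
    and Lhat_unique: "\<And>a a' x. a \<in> A \<Longrightarrow> a' \<in> A \<Longrightarrow> a' \<noteq> astar \<Longrightarrow> x \<noteq> Lhat a a' \<Longrightarrow>
        I a a' (Lhat a a') < I a a' x"
    and Lhat_distinct: "\<And>a b a'. a \<in> A \<Longrightarrow> b \<in> A \<Longrightarrow> a' \<in> A \<Longrightarrow> a' \<noteq> astar \<Longrightarrow> a \<noteq> b \<Longrightarrow>
        Lhat a a' \<noteq> Lhat b a'"
    and I_level: "\<And>a a' \<alpha>. a \<in> A \<Longrightarrow> a' \<in> A \<Longrightarrow> a' \<noteq> astar \<Longrightarrow> compact {x. I a a' x \<le> ereal \<alpha>}"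
    and I_cont1: "\<And>a'. a' \<in> A \<Longrightarrow> a' \<noteq> astar \<Longrightarrow> isCont (I astar a') (Lhat a' a')"
    and I_cont2: "\<And>a'. a' \<in> A \<Longrightarrow> a' \<noteq> astar \<Longrightarrow> isCont (I astar a') (Lhat astar a')"
    and u_mono: "strict_mono_on {w..} u"
    and \<phi>_mono: "\<And>n. mono (\<phi> n)"
    and \<phi>_range: "\<And>n x. \<phi> n x \<in> u ` {w..}"
    and bdd: "\<exists>K. \<forall>n. \<forall>z\<in>space \<nu>. \<bar>\<phi> n (LLR g astar n ahat z)\<bar> \<le> K"
    and IC: "\<And>n. (\<integral>z. \<phi> n (LLR g astar n ahat z) \<partial>(mu \<nu> g n astar)) - c astar
        \<ge> (\<integral>z. \<phi> n (LLR g astar n ahat z) \<partial>(mu \<nu> g n ahat)) - c ahat"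
  shows "- I astar ahat (Lhat ahat ahat) \<le>
    liminf (\<lambda>n. elog (var (mu \<nu> g n astar) (\<lambda>z. \<phi> n (LLR g astar n ahat z))) / ereal (real n))"
proof -
  have "ahat \<noteq> astar"
    using cost by auto
  interpret likelihood_ratio_pair \<nu> g astar ahat
    using astar ahat \<open>ahat \<noteq> astar\<close>
    by (intro likelihood_ratio_pair.intro g_meas g_nonneg g_prob L_wd) simp_all
  define l where "l = Lhat ahat ahat"
  have concentrated: "(\<lambda>n. measure (mu \<nu> g n ahat) {z \<in> space \<nu>. llr n z \<in> - ball l d}) \<longlonglongrightarrow> 0"
    if "0 < d" for d
    using tendsto_measure_outside_ball_if_LDP_upper[OF LDP_upper[OF ahat ahat \<open>ahat \<noteq> astar\<close>]
        I_level Lhat_unique I_nonneg that] ahat \<open>ahat \<noteq> astar\<close>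
    by (simp add: l_def)
  have "- I astar ahat l \<le> ereal l"
  proof (rule uminus_rate_le_if_LDP_lower)
    show "- (INF x\<in>ball l d. I astar ahat x)
      \<le> liminf (\<lambda>n. elog (measure (mu \<nu> g n astar) {z \<in> space \<nu>. llr n z \<in> ball l d}) / ereal (real n))"
      for d
      using LDP_lower[OF astar ahat \<open>ahat \<noteq> astar\<close> borel_open[OF open_ball[of l d]]] by simp
  qed
  also have "\<dots> \<le> liminf (\<lambda>n. elog (var (mu \<nu> g n astar) (\<lambda>z. \<phi> n (llr n z))) / ereal (real n))"
  proof (rule liminf_log_var_mu_astar_ge[where D = "c astar - c ahat"])
    show "(\<lambda>z. \<phi> n (llr n z)) \<in> borel_measurable \<nu>" for n
      using borel_measurable_mono[OF \<phi>_mono] by measurable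
    show "c astar - c ahat
      \<le> (\<integral>z. \<phi> n (llr n z) \<partial>mu \<nu> g n astar) - (\<integral>z. \<phi> n (llr n z) \<partial>mu \<nu> g n ahat)" for n
      using IC[of n] by linarith
  qed (use bdd cost concentrated in auto)
  finally show ?thesis
    unfolding l_def .
qed

end
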